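(* Let $\mathbb{X},\mathbb{Y}$ be finite-dimensional real Hilbert spaces, $f:\mathbb{X}\to(-\infty,\infty]$ and $g:\mathbb{Y}\to(-\infty,\infty]$ proper, convex and lower semicontinuous, $K:\mathbb{X}\to\mathbb{Y}$ linear, and $h:\mathbb{X}\to\mathbb{R}$ convex and differentiable with $\bar L$-Lipschitz gradient. Assume (A1) below holds and that $g^*$ is strongly convex with modulus $\gamma_{g^*}>0$ and $h$ is strongly convex with modulus $\gamma_h>0$. Let $\{(z_n,x_n,w_n,y_n,\tau_n)\}$ be generated by the P-GRPDA algorithm described in the context, and suppose $\{(x_n,y_n)\}$ converges to the unique primal-dual solution $(\bar x,\bar y)$. Then there exist constants $V_1,V_2,Z>0$, a scalar $\zeta\in(0,1)$ and a natural number $n_4$ such that for all $n\ge n_4$, $$\|\bar x-z_{n+2}\|^2\le Z\zeta^n,\qquad\|\bar y-y_n\|^2\le V_1\zeta^n,\qquad\|x_n-x_{n+1}\|^2\le V_2\zeta^n,$$ and thus $\{(x_n,y_n)\}$ converges R-linearly to $(\bar x,\bar y)$.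
   Context: $\phi=\frac{1+\sqrt5}{2}$; $K^*$ adjoint of $K$; $g^*$ Fenchel conjugate of $g$; $\operatorname{prox}_{\lambda f}(x)=\arg\min_{u}\{f(u)+\frac{1}{2\lambda}\|u-x\|^2\}$. (A1): the saddle point problem $\min_{x}\max_{y}\mathbb{L}(x,y):=f(x)+h(x)+\langle Kx,y\rangle-g^*(y)$ has a nonempty solution set, and $0\in\operatorname{ri}(K(\operatorname{dom}f)-\operatorname{dom}g)$ (ri = relative interior). (The paper also assumes the proximal maps of $f,g$ are efficiently computable.) A primal-dual solution is a saddle point $(\bar x,\bar y)$ of $\mathbb{L}$. Strong convexity: $h(y)-h(z)\ge\langle\nabla h(z),y-z\rangle+\frac{\gamma_h}{2}\|y-z\|^2$ for all $y,z$; $g^*(y)-g^*(z)\ge\langle u,y-z\rangle+\frac{\gamma_{g^*}}{2}\|y-z\|^2$ for all $y,z$ and all $u\in\partial g^*(z)$. A sequence $v_n$ converges R-linearly to $v$ if $\|v_n-v\|\le M\epsilon_n$ for all large $n$ with some $M>0$ and some sequence $\epsilon_n$ converging Q-linearly to $0$ (i.e. $|\epsilon_{n+1}|\le q|\epsilon_n|$ for large $n$, some $q\in(0,1)$). P-GRPDA: choose $x_0\in\mathbb{X}$, $y_0\in\mathbb{Y}$, set $z_0=x_0$, choose $\beta>0$, $\psi\in(1,\phi]$, $0<2\mu'<\mu<\psi/2$, $\tau_0>0$. For $n=1,2,\dots$: $z_n=\frac{\psi-1}{\psi}x_{n-1}+\frac1\psi z_{n-1}$; $x_n=\operatorname{prox}_{\tau_{n-1}f}\big(z_n-\tau_{n-1}K^*y_{n-1}-\tau_{n-1}\nabla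 h(x_{n-1})\big)$; $\tau_n=\min\left\{\tau_{n-1},\ \frac{\mu\|x_n-x_{n-1}\|}{\sqrt\beta\|Kx_n-Kx_{n-1}\|},\ \frac{\mu'\|x_n-x_{n-1}\|}{\|\nabla h(x_n)-\nabla h(x_{n-1})\|}\right\}$, $\sigma_n=\beta\tau_n$; $w_n=\operatorname{prox}_{\frac{1}{\sigma_n}g}\big(\frac{y_{n-1}}{\sigma_n}+Kx_n\big)$; $y_n=y_{n-1}+\sigma_n(Kx_n-w_n)$. Conventions in the $\tau_n$ update: $1/0=\infty$ (a term with zero denominator and nonzero numerator is ignored) and $0/0=\infty$ (so $\tau_n=\tau_{n-1}$ if $x_n=x_{n-1}$). *)

theory Defs
  imports "HOL-Analysis.Analysis"
begin

text \<open>Extended-real valued functions \<open>'a \<Rightarrow> ereal\<close> model functions into (-inf, +inf].\<close>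

definition edom :: "('a \<Rightarrow> ereal) \<Rightarrow> 'a set" where
  "edom f = {x. f x < \<infinity>}"

definition proper_fun :: "('a \<Rightarrow> ereal) \<Rightarrow> bool" where
  "proper_fun f \<longleftrightarrow> (\<forall>x. f x \<noteq> -\<infinity>) \<and> (\<exists>x. f x \<noteq> \<infinity>)"

definition convex_efun :: "('a::real_vector \<Rightarrow> ereal) \<Rightarrow> bool" where
  "convex_efun f \<longleftrightarrow> convex {(x, r::real). f x \<le> ereal r}"

definition lsc_efun :: "('a::topological_space \<Rightarrow> ereal) \<Rightarrow> bool" where
  "lsc_efun f \<longleftrightarrow> (\<forall>c::real. closed {x. f x \<le> ereal c})"

definition fenchel_conj :: "('a::real_inner \<Rightarrow> ereal) \<Rightarrow> 'a \<Rightarrow> ereal" where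
  "fenchel_conj g y = (SUP x. ereal (inner x y) - g x)"

definition subdiff :: "('a::real_inner \<Rightarrow> ereal) \<Rightarrow> 'a \<Rightarrow> 'a set" where
  "subdiff p z = {u. \<bar>p z\<bar> \<noteq> \<infinity> \<and> (\<forall>y. p z + ereal (inner u (y - z)) \<le> p y)}"

definition prox :: "real \<Rightarrow> ('a::real_normed_vector \<Rightarrow> ereal) \<Rightarrow> 'a \<Rightarrow> 'a" where
  "prox lam f x = (SOME u. \<forall>v. f u + ereal (norm (u - x)^2 / (2 * lam))
                                 \<le> f v + ereal (norm (v - x)^2 / (2 * lam)))"

definition saddle_L ::
  "('x::real_inner \<Rightarrow> ereal) \<Rightarrow> ('x \<Rightarrow> real) \<Rightarrow> ('x \<Rightarrow> 'y::real_inner) \<Rightarrow> ('y \<Rightarrow> ereal)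
     \<Rightarrow> 'x \<Rightarrow> 'y \<Rightarrow> ereal" where
  "saddle_L f h K g x y = f x + ereal (h x) + ereal (inner (K x) y) - fenchel_conj g y"

definition is_saddle_point ::
  "('x::real_inner \<Rightarrow> ereal) \<Rightarrow> ('x \<Rightarrow> real) \<Rightarrow> ('x \<Rightarrow> 'y::real_inner) \<Rightarrow> ('y \<Rightarrow> ereal)
     \<Rightarrow> 'x \<Rightarrow> 'y \<Rightarrow> bool" where
  "is_saddle_point f h K g xb yb \<longleftrightarrow>
     (\<forall>x y. saddle_L f h K g xb y \<le> saddle_L f h K g xb yb \<and>
            saddle_L f h K g xb yb \<le> saddle_L f h K g x yb)"

definition strongly_convex_grad :: "('a::real_inner \<Rightarrow> real) \<Rightarrow> ('a \<Rightarrow> 'a) \<Rightarrow> real \<Rightarrow> bool" where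
  "strongly_convex_grad h dh gam \<longleftrightarrow>
     (\<forall>y z. h y - h z \<ge> inner (dh z) (y - z) + gam / 2 * norm (y - z)^2)"

definition strongly_convex_efun :: "('a::real_inner \<Rightarrow> ereal) \<Rightarrow> real \<Rightarrow> bool" where
  "strongly_convex_efun p gam \<longleftrightarrow>
     (\<forall>y z. \<forall>u \<in> subdiff p z. p z + ereal (inner u (y - z) + gam / 2 * norm (y - z)^2) \<le> p y)"

definition Q_linear_zero :: "(nat \<Rightarrow> real) \<Rightarrow> bool" where
  "Q_linear_zero e \<longleftrightarrow> e \<longlonglongrightarrow> 0 \<and>
     (\<exists>q. 0 < q \<and> q < 1 \<and> (\<exists>N. \<forall>n\<ge>N. \<bar>e (Suc n)\<bar> \<le> q * \<bar>e n\<bar>))"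

definition R_linear_conv :: "(nat \<Rightarrow> 'a::real_normed_vector) \<Rightarrow> 'a \<Rightarrow> bool" where
  "R_linear_conv v l \<longleftrightarrow>
     (\<exists>M e. M > 0 \<and> Q_linear_zero e \<and> (\<exists>N. \<forall>n\<ge>N. norm (v n - l) \<le> M * e n))"

definition golden :: real where "golden = (1 + sqrt 5) / 2"

text \<open>Step size rule: minimum of \<open>\<tau>_{n-1}\<close> and the two ratios, where a ratio with
  zero denominator is ignored (conventions 1/0 = 0/0 = \<infinity>).\<close>
definition pgrpda_step ::
  "('x::real_normed_vector \<Rightarrow> 'y::real_normed_vector) \<Rightarrow> ('x \<Rightarrow> 'x) \<Rightarrow> real \<Rightarrow> real \<Rightarrow> real
     \<Rightarrow> real \<Rightarrow> 'x \<Rightarrow> 'x \<Rightarrow> real" where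
  "pgrpda_step K dh beta mu mu' tau_prev xn xp =
     Min ({tau_prev}
          \<union> {mu * norm (xn - xp) / (sqrt beta * norm (K xn - K xp)) | _::unit. K xn - K xp \<noteq> 0}
          \<union> {mu' * norm (xn - xp) / norm (dh xn - dh xp) | _::unit. dh xn - dh xp \<noteq> 0})"

definition is_pgrpda ::
  "('x::euclidean_space \<Rightarrow> ereal) \<Rightarrow> ('x \<Rightarrow> 'x) \<Rightarrow> ('x \<Rightarrow> 'y::euclidean_space) \<Rightarrow> ('y \<Rightarrow> ereal)
   \<Rightarrow> real \<Rightarrow> real \<Rightarrow> real \<Rightarrow> real
   \<Rightarrow> (nat \<Rightarrow> 'x) \<Rightarrow> (nat \<Rightarrow> 'x) \<Rightarrow> (nat \<Rightarrow> 'y) \<Rightarrow> (nat \<Rightarrow> 'y) \<Rightarrow> (nat \<Rightarrow> real) \<Rightarrow> bool" where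
  "is_pgrpda f dh K g beta psi mu mu' z x w y tau \<longleftrightarrow>
     beta > 0 \<and> 1 < psi \<and> psi \<le> golden \<and> 0 < 2 * mu' \<and> 2 * mu' < mu \<and> mu < psi / 2 \<and>
     tau 0 > 0 \<and> z 0 = x 0 \<and>
     (\<forall>n\<ge>1.
        z n = ((psi - 1) / psi) *\<^sub>R x (n - 1) + (1 / psi) *\<^sub>R z (n - 1) \<and>
        x n = prox (tau (n - 1)) f
                (z n - tau (n - 1) *\<^sub>R adjoint K (y (n - 1)) - tau (n - 1) *\<^sub>R dh (x (n - 1))) \<and>
        tau n = pgrpda_step K dh beta mu mu' (tau (n - 1)) (x n) (x (n - 1)) \<and>
        w n = prox (1 / (beta * tau n)) g ((1 / (beta * tau n)) *\<^sub>R y (n - 1) + K (x n)) \<and>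
        y n = y (n - 1) + (beta * tau n) *\<^sub>R (K (x n) - w n))"

end

theory Submission
  imports Defs
begin

text \<open>The iterates satisfy subgradient inclusions: two consecutive proximal steps give
  subgradients of \<open>f\<close> at \<open>x\<^sub>n\<^sub>+\<^sub>1\<close> and \<open>x\<^sub>n\<^sub>+\<^sub>2\<close>, and the dual step puts \<open>w\<^sub>n\<^sub>+\<^sub>1\<close> in the
  subdifferential of \<open>g\<^sup>*\<close> at \<open>y\<^sub>n\<^sub>+\<^sub>1\<close>. Combining them with the inclusions at the saddle point
  (cyclic monotonicity for \<open>f\<close>, strong monotonicity for \<open>g\<^sup>*\<close> and \<open>\<nabla>h\<close>) gives the one-step
  inequality \<open>E\<^sub>n\<^sub>+\<^sub>1 + D\<^sub>n \<le> E\<^sub>n\<close> for the energy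
  \<open>E\<^sub>n = \<psi>/(2(\<psi>-1)) \<parallel>z\<^sub>n\<^sub>+\<^sub>2 - xb\<parallel>\<^sup>2 + \<parallel>y\<^sub>n - yb\<parallel>\<^sup>2/(2\<beta>) + \<mu>'/2 \<parallel>x\<^sub>n\<^sub>+\<^sub>1 - x\<^sub>n\<parallel>\<^sup>2\<close>,
  as soon as consecutive step-size ratios are close to 1. The step sizes are non-increasing and
  bounded below, so this holds for all large \<open>n\<close>. The dissipation \<open>D\<^sub>n\<close> dominates a fixed
  multiple of \<open>E\<^sub>n\<^sub>+\<^sub>1\<close>, hence \<open>E\<close> contracts by a fixed factor \<open>\<zeta> < 1\<close>, and every distance in
  the statement is bounded by a multiple of \<open>E\<close>.\<close>

section \<open>Convex analysis\<close>

lemma convex_efun_combination: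
  fixes f :: "'a::real_vector \<Rightarrow> ereal"
  assumes "convex_efun f" "f x \<le> ereal a" "f y \<le> ereal b" "0 \<le> t" "t \<le> 1"
  shows "f ((1 - t) *\<^sub>R x + t *\<^sub>R y) \<le> ereal ((1 - t) * a + t * b)"
proof -
  have "(x, a) \<in> {(x, r::real). f x \<le> ereal r}" "(y, b) \<in> {(x, r::real). f x \<le> ereal r}"
    using assms by auto
  then have "(1 - t) *\<^sub>R (x, a) + t *\<^sub>R (y, b) \<in> {(x, r::real). f x \<le> ereal r}"
    using assms(1,4,5) unfolding convex_efun_def convex_def by (metis diff_add_cancel diff_ge_0_iff_ge)
  then show ?thesis by simp
qed

lemma closed_epigraph_if_lsc_efun:
  fixes f :: "'a::metric_space \<Rightarrow> ereal"
  assumes "lsc_efun f"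
  shows "closed {(x, r::real). f x \<le> ereal r}"
  unfolding closed_sequential_limits
proof (intro allI impI, elim conjE)
  fix s :: "nat \<Rightarrow> 'a \<times> real" and l :: "'a \<times> real"
  assume s: "\<forall>n. s n \<in> {(x, r). f x \<le> ereal r}" and lim: "s \<longlonglongrightarrow> l"
  obtain x r where l: "l = (x, r)" by fastforce
  have fst_lim: "(fst \<circ> s) \<longlonglongrightarrow> x" and snd_lim: "(snd \<circ> s) \<longlonglongrightarrow> r"
    using tendsto_fst[OF lim] tendsto_snd[OF lim] l by (auto simp: o_def)
  have le_eps: "f x \<le> ereal (r + e)" if "e > 0" for e
  proof -
    have "eventually (\<lambda>n. snd (s n) < r + e) sequentially"
      using order_tendstoD(2)[OF snd_lim, of "r + e"] that by (simp add: o_def)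
    then have "eventually (\<lambda>n. (fst \<circ> s) n \<in> {x. f x \<le> ereal (r + e)}) sequentially"
    proof (rule eventually_mono)
      fix n assume "snd (s n) < r + e"
      moreover have "f (fst (s n)) \<le> ereal (snd (s n))" using s[rule_format, of n]
        by (cases "s n") auto
      ultimately show "(fst \<circ> s) n \<in> {x. f x \<le> ereal (r + e)}"
        by (simp add: o_def) (meson ereal_less_eq(3) less_imp_le order_trans)
    qed
    from Lim_in_closed_set[OF _ this _ fst_lim] assms show ?thesis
      unfolding lsc_efun_def by auto
  qed
  have "f x \<le> ereal r"
  proof (cases "f x")
    case (real c)
    then have "c \<le> r + e" if "e > 0" for e using le_eps[OF that] by simp
    then show ?thesis using real by (simp add: field_le_epsilon)
  qed (use le_eps[of 1] in simp_all)
  then show "l \<in> {(x, r). f x \<le> ereal r}" using l by simp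
qed

lemma proper_fun_obtain_finite:
  assumes "proper_fun f"
  obtains x c where "f x = ereal c"
  using assms unfolding proper_fun_def by (metis ereal_cases)

text \<open>Separate a point strictly below the epigraph from the closed convex epigraph.\<close>
lemma proper_convex_lsc_affine_minorant:
  fixes f :: "'a::euclidean_space \<Rightarrow> ereal"
  assumes "proper_fun f" "convex_efun f" "lsc_efun f"
  shows "\<exists>a b. \<forall>x. ereal (inner a x + b) \<le> f x"
proof -
  obtain x0 c where c: "f x0 = ereal c" using proper_fun_obtain_finite[OF assms(1)] .
  let ?S = "{(x, r::real). f x \<le> ereal r}"
  have "convex ?S" using assms(2) unfolding convex_efun_def .
  moreover have "closed ?S" using closed_epigraph_if_lsc_efun[OF assms(3)] .
  moreover have "(x0, c - 1) \<notin> ?S" using c by simp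
  ultimately obtain A b where Ab: "inner A (x0, c - 1) < b" "\<forall>z\<in>?S. b < inner A z"
    using separating_hyperplane_closed_point by blast
  obtain a a0 where A: "A = (a, a0)" by fastforce
  have below: "inner a x0 + (c - 1) * a0 < b" using Ab(1) A by (simp add: inner_Pair mult.commute)
  have above: "\<And>x r. f x \<le> ereal r \<Longrightarrow> b < inner a x + r * a0"
    using Ab(2) A by (auto simp: inner_Pair mult.commute)
  have "b < inner a x0 + c * a0" using above[of x0 c] c by simp
  with below have a0: "a0 > 0" by (simp add: algebra_simps)
  have "ereal (inner (- a /\<^sub>R a0) x + b / a0) \<le> f x" for x
  proof (cases "f x")
    case (real r)
    then have "b < inner a x + r * a0" using above by simp
    then have "b / a0 - inner a x / a0 < r" using a0 by (simp add: field_simps)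
    then show ?thesis using real by (simp add: inner_minus_left divide_inverse mult.commute)
  next
    case MInf then show ?thesis using assms(1) unfolding proper_fun_def by blast
  qed simp
  then show ?thesis by blast
qed

lemma quadratic_le_linear_bound:
  fixes d A D lam :: real
  assumes lam: "lam > 0" and d: "d \<ge> 0" and A: "A \<ge> 0" and le: "d^2 / (2 * lam) \<le> D + A * d"
  shows "d \<le> sqrt (4 * lam * (\<bar>D\<bar> + lam * A^2))"
proof -
  have "0 \<le> (d - 2 * lam * A)^2 / (4 * lam)" using lam by simp
  also have "\<dots> = d^2 / (4 * lam) + lam * A^2 - A * d"
    using lam by (simp add: power2_eq_square field_simps)
  finally have "d^2 / (2 * lam) - d^2 / (4 * lam) \<le> \<bar>D\<bar> + lam * A^2" using le by linarith
  moreover have "d^2 / (2 * lam) - d^2 / (4 * lam) = d^2 / (4 * lam)" using lam by (simp add: field_simps)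
  ultimately have "d^2 \<le> 4 * lam * (\<bar>D\<bar> + lam * A^2)" using lam by (simp add: field_simps)
  then show ?thesis using d by (simp add: real_le_rsqrt)
qed

lemma bounded_epigraph_below_parabola:
  fixes f :: "'a::euclidean_space \<Rightarrow> ereal"
  assumes minorant: "\<And>u. ereal (inner a u + b) \<le> f u" and lam: "lam > 0"
  shows "bounded ({(u, r::real). f u \<le> ereal r} \<inter> {p. snd p + norm (fst p - x)^2 / (2 * lam) \<le> C})"
proof -
  define R where "R = sqrt (4 * lam * (\<bar>C - b - inner a x\<bar> + lam * norm a^2))"
  have "(u, r) \<in> cball x R \<times> {- norm a * (R + norm x) + b .. C}"
    if fu: "f u \<le> ereal r" and rq: "r + norm (u - x)^2 / (2 * lam) \<le> C" for u r
  proof -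
    have aub: "inner a u + b \<le> r" using order_trans[OF minorant fu] by simp
    have "- (norm a * norm (u - x)) \<le> inner a (u - x)"
      using Cauchy_Schwarz_ineq2[of a "u - x"] by linarith
    then have "norm (u - x)^2 / (2 * lam) \<le> (C - b - inner a x) + norm a * norm (u - x)"
      using aub rq by (simp add: inner_diff_right)
    then have dR: "norm (u - x) \<le> R"
      unfolding R_def by (rule quadratic_le_linear_bound[OF lam norm_ge_zero norm_ge_zero])
    then have "norm u \<le> R + norm x" by (smt (verit) norm_triangle_ineq2)
    then have "- (norm a * (R + norm x)) \<le> inner a u"
      using Cauchy_Schwarz_ineq2[of a u] by (smt (verit) mult_left_mono norm_ge_zero)
    moreover have "r \<le> C" using rq lam by (smt (verit) divide_nonneg_pos zero_le_power2)
    ultimately show ?thesis using dR aub by (simp add: dist_norm norm_minus_commute)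
  qed
  then have "{(u, r::real). f u \<le> ereal r} \<inter> {p. snd p + norm (fst p - x)^2 / (2 * lam) \<le> C}
      \<subseteq> cball x R \<times> {- norm a * (R + norm x) + b .. C}"
    by auto
  then show ?thesis by (rule bounded_subset[OF bounded_Times[OF bounded_cball bounded_closed_interval]])
qed

text \<open>Minimize \<open>r + q u\<close> over the compact part \<open>T\<close> of the epigraph lying below the value at a
  point of the domain; points of the epigraph outside \<open>T\<close> are no better.\<close>
lemma prox_minimizer_exists:
  fixes f :: "'a::euclidean_space \<Rightarrow> ereal"
  assumes f: "proper_fun f" "convex_efun f" "lsc_efun f" and lam: "lam > 0"
  shows "\<exists>u. \<forall>v. f u + ereal (norm (u - x)^2 / (2 * lam)) \<le> f v + ereal (norm (v - x)^2 / (2 * lam))"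
proof -
  define q where "q u = norm (u - x)^2 / (2 * lam)" for u
  obtain a b where ab: "\<And>u. ereal (inner a u + b) \<le> f u"
    using proper_convex_lsc_affine_minorant[OF f] by blast
  obtain x0 c0 where c0: "f x0 = ereal c0" using proper_fun_obtain_finite[OF f(1)] .
  define C where "C = c0 + q x0"
  define T where "T = {(u, r::real). f u \<le> ereal r} \<inter> {p. snd p + q (fst p) \<le> C}"
  have contq: "continuous_on UNIV q" using lam unfolding q_def by (intro continuous_intros) auto
  have "closed T" unfolding T_def
  proof (intro closed_Int closed_epigraph_if_lsc_efun[OF f(3)])
    show "closed {p. snd p + q (fst p) \<le> C}"
      by (intro closed_Collect_le continuous_intros continuous_on_compose2[OF contq]) auto
  qed
  moreover have "bounded T"
    unfolding T_def q_def by (rule bounded_epigraph_below_parabola[OF ab lam])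
  ultimately have "compact T" by (simp add: compact_eq_bounded_closed)
  moreover have "continuous_on T (\<lambda>p. snd p + q (fst p))"
    by (intro continuous_intros continuous_on_compose2[OF contq]) auto
  moreover have "(x0, c0) \<in> T" unfolding T_def C_def using c0 by simp
  ultimately obtain p where pT: "p \<in> T" and pmin: "\<And>p'. p' \<in> T \<Longrightarrow> snd p + q (fst p) \<le> snd p' + q (fst p')"
    using continuous_attains_inf[of T "\<lambda>p. snd p + q (fst p)"] by blast
  obtain u r where p: "p = (u, r)" by fastforce
  have fu: "f u \<le> ereal r" and rq: "r + q u \<le> C" using pT p unfolding T_def by auto
  have "f u + ereal (q u) \<le> f v + ereal (q v)" for v
  proof (cases "f v")
    case (real cv)
    have "r + q u \<le> cv + q v"
    proof (cases "cv + q v \<le> C")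
      case True
      then have "(v, cv) \<in> T" unfolding T_def using real by simp
      from pmin[OF this] p show ?thesis by simp
    qed (use rq in simp)
    then show ?thesis using fu real
      by (metis add_mono ereal_less_eq(3) order_trans plus_ereal.simps(1) order_refl)
  next
    case MInf then show ?thesis using f(1) unfolding proper_fun_def by blast
  qed simp
  then show ?thesis unfolding q_def by blast
qed

lemma norm_add_scaleR_square:
  fixes a d :: "'a::real_inner"
  shows "norm (a + t *\<^sub>R d)^2 = norm a^2 + 2 * t * inner a d + t^2 * norm d^2"
  unfolding power2_norm_eq_inner
  by (simp add: inner_add_left inner_add_right inner_commute algebra_simps power2_eq_square)

lemma nonpos_if_le_mult_small:
  fixes A C :: real
  assumes "\<And>t. 0 < t \<Longrightarrow> t \<le> 1 \<Longrightarrow> A \<le> t * C" "C \<ge> 0"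
  shows "A \<le> 0"
proof (rule ccontr)
  assume "\<not> A \<le> 0"
  then have A: "A > 0" by simp
  define t where "t = min 1 (A / (2 * (C + 1)))"
  have t: "0 < t" "t \<le> 1" using A assms(2) unfolding t_def by auto
  have "t * C \<le> (A / (2 * (C + 1))) * C" unfolding t_def using assms(2)
    by (intro mult_right_mono) auto
  also have "\<dots> < A"
  proof -
    have "A * C < A * (2 * (C + 1))" using A assms(2) by (intro mult_strict_left_mono) auto
    then show ?thesis using assms(2) by (simp add: pos_divide_less_eq)
  qed
  finally show False using assms(1)[OF t] by simp
qed

lemma subdiff_finite_value:
  assumes "u \<in> subdiff p z"
  obtains c where "p z = ereal c"
  using assms unfolding subdiff_def by (cases "p z") auto

lemma prox_subdiff:
  fixes f :: "'a::euclidean_space \<Rightarrow> ereal"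
  assumes f: "proper_fun f" "convex_efun f" "lsc_efun f" and lam: "lam > 0"
  shows "(1 / lam) *\<^sub>R (x - prox lam f x) \<in> subdiff f (prox lam f x)"
proof -
  define u where "u = prox lam f x"
  define q where "q v = norm (v - x)^2 / (2 * lam)" for v
  have min: "\<And>v. f u + ereal (q u) \<le> f v + ereal (q v)"
    using someI_ex[OF prox_minimizer_exists[OF f lam, of x]] unfolding u_def prox_def q_def by blast
  obtain x0 c0 where c0: "f x0 = ereal c0" using proper_fun_obtain_finite[OF f(1)] .
  have "f u \<noteq> \<infinity>" using min[of x0] c0 by auto
  then obtain c where c: "f u = ereal c" using f(1) unfolding proper_fun_def by (cases "f u") auto
  have "f u + ereal (inner ((1 / lam) *\<^sub>R (x - u)) (y - u)) \<le> f y" for y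
  proof (cases "f y")
    case (real cy)
    \<comment> \<open>compare \<open>u\<close> with \<open>(1 - t) u + t y\<close> and let \<open>t \<rightarrow> 0\<close>\<close>
    have "c - cy - inner (u - x) (y - u) / lam \<le> 0"
    proof (rule nonpos_if_le_mult_small)
      fix t :: real assume t: "0 < t" "t \<le> 1"
      define ut where "ut = (1 - t) *\<^sub>R u + t *\<^sub>R y"
      have "f ut \<le> ereal ((1 - t) * c + t * cy)"
        unfolding ut_def using convex_efun_combination[OF f(2), of u c y cy t] c real t by simp
      then have "f ut + ereal (q ut) \<le> ereal ((1 - t) * c + t * cy) + ereal (q ut)"
        by (rule add_right_mono)
      from order_trans[OF min[of ut] this] have ineq: "c + q u \<le> (1 - t) * c + t * cy + q ut"
        using c by simp
      have "ut - x = (u - x) + t *\<^sub>R (y - u)" unfolding ut_def by (simp add: algebra_simps)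
      then have "q ut = (norm (u - x)^2 + 2 * t * inner (u - x) (y - u) + t^2 * norm (y - u)^2) / (2 * lam)"
        unfolding q_def by (metis norm_add_scaleR_square)
      then have "t * c \<le> t * cy + t * (inner (u - x) (y - u) / lam) + t * (t * (norm (y - u)^2 / (2 * lam)))"
        using ineq lam unfolding q_def by (simp add: field_simps power2_eq_square)
      then have "t * (c - cy - inner (u - x) (y - u) / lam) \<le> t * (t * (norm (y - u)^2 / (2 * lam)))"
        by (simp add: algebra_simps)
      then show "c - cy - inner (u - x) (y - u) / lam \<le> t * (norm (y - u)^2 / (2 * lam))"
        using t by (metis mult_le_cancel_left_pos)
    qed (use lam in simp)
    then have "c + inner ((1 / lam) *\<^sub>R (x - u)) (y - u) \<le> cy"
      by (simp add: inner_diff_left inner_diff_right algebra_simps divide_inverse)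
    then show ?thesis using real c by simp
  next
    case MInf then show ?thesis using f(1) unfolding proper_fun_def by blast
  qed (simp add: c)
  then show ?thesis using c unfolding subdiff_def u_def by simp
qed

lemma subdiff_cyclically_monotone3:
  assumes "a \<in> subdiff p u" "b \<in> subdiff p v" "c \<in> subdiff p w"
  shows "inner a (v - u) + inner b (w - v) + inner c (u - w) \<le> 0"
proof -
  obtain pu pv pw where finite_vals: "p u = ereal pu" "p v = ereal pv" "p w = ereal pw"
    using assms by (meson subdiff_finite_value)
  have "p u + ereal (inner a (v - u)) \<le> p v" "p v + ereal (inner b (w - v)) \<le> p w"
    "p w + ereal (inner c (u - w)) \<le> p u"
    using assms unfolding subdiff_def by auto
  then show ?thesis unfolding finite_vals by simp
qed

lemma strongly_convex_subdiff_monotone: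
  assumes "strongly_convex_efun p gam" "u \<in> subdiff p a" "v \<in> subdiff p b"
  shows "gam * norm (a - b)^2 \<le> inner (u - v) (a - b)"
proof -
  obtain pa pb where finite_vals: "p a = ereal pa" "p b = ereal pb"
    using assms by (meson subdiff_finite_value)
  have "p b + ereal (inner v (a - b) + gam / 2 * norm (a - b)^2) \<le> p a"
    "p a + ereal (inner u (b - a) + gam / 2 * norm (b - a)^2) \<le> p b"
    using assms unfolding strongly_convex_efun_def by blast+
  then have "pb + (inner v (a - b) + gam / 2 * norm (a - b)^2) \<le> pa"
    "pa + (inner u (b - a) + gam / 2 * norm (b - a)^2) \<le> pb"
    unfolding finite_vals by simp_all
  moreover have "norm (b - a) = norm (a - b)" by (rule norm_minus_commute)
  ultimately show ?thesis by (simp add: inner_diff_left inner_diff_right)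
qed

lemma fenchel_conj_neq_minf:
  assumes "proper_fun g"
  shows "fenchel_conj g y \<noteq> -\<infinity>"
proof -
  obtain x c where c: "g x = ereal c" using proper_fun_obtain_finite[OF assms] .
  have "ereal (inner x y) - g x \<le> fenchel_conj g y"
    unfolding fenchel_conj_def by (rule SUP_upper) simp
  then show ?thesis using c by auto
qed

lemma subdiff_fenchel_conj_if_subdiff:
  fixes g :: "'a::real_inner \<Rightarrow> ereal"
  assumes "v \<in> subdiff g w"
  shows "w \<in> subdiff (fenchel_conj g) v"
proof -
  obtain c where c: "g w = ereal c" using assms by (rule subdiff_finite_value)
  have sub: "c + inner v (u - w) \<le> g u" for u
    using assms c unfolding subdiff_def by auto
  have lower: "ereal (inner w y - c) \<le> fenchel_conj g y" for y
  proof -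
    have "ereal (inner w y) - g w \<le> fenchel_conj g y"
      unfolding fenchel_conj_def by (rule SUP_upper) simp
    then show ?thesis using c by simp
  qed
  have "fenchel_conj g v \<le> ereal (inner w v - c)"
    unfolding fenchel_conj_def
  proof (rule SUP_least)
    fix u
    show "ereal (inner u v) - g u \<le> ereal (inner w v - c)"
    proof (cases "g u")
      case (real gu)
      then have "c + inner v (u - w) \<le> gu" using sub[of u] by simp
      then show ?thesis using real by (simp add: inner_diff_right inner_commute)
    qed (use sub[of u] in simp_all)
  qed
  then have conj_v: "fenchel_conj g v = ereal (inner w v - c)" using lower[of v] by (rule antisym)
  have "fenchel_conj g v + ereal (inner w (y - v)) \<le> fenchel_conj g y" for y
    using lower[of y] unfolding conj_v by (simp add: inner_diff_right)
  then show ?thesis using conj_v unfolding subdiff_def by simp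
qed

lemma subdiff_at_minimizer_plus_smooth:
  fixes f :: "'a::real_inner \<Rightarrow> ereal" and phi :: "'a \<Rightarrow> real"
  assumes f: "convex_efun f" "\<And>u. f u \<noteq> -\<infinity>" and fb: "f xb = ereal fb"
    and min: "\<And>u a. f u = ereal a \<Longrightarrow> fb + phi xb \<le> a + phi u"
    and grad: "\<And>u v. phi u - phi v \<le> inner (dphi u) (u - v)"
    and lip: "L-lipschitz_on UNIV dphi"
  shows "- dphi xb \<in> subdiff f xb"
proof -
  have L: "L \<ge> 0" using lip by (rule lipschitz_on_nonneg)
  have "ereal (fb + inner (- dphi xb) (u - xb)) \<le> f u" for u
  proof (cases "f u")
    case (real a)
    \<comment> \<open>compare \<open>xb\<close> with \<open>(1 - t) xb + t u\<close>; the Lipschitz gradient makes the error \<open>O(t\<^sup>2)\<close>\<close>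
    have "fb - a - inner (dphi xb) (u - xb) \<le> 0"
    proof (rule nonpos_if_le_mult_small)
      fix t :: real assume t: "0 < t" "t \<le> 1"
      define ut where "ut = (1 - t) *\<^sub>R xb + t *\<^sub>R u"
      have utx: "ut - xb = t *\<^sub>R (u - xb)" unfolding ut_def by (simp add: algebra_simps)
      have "f ut \<le> ereal ((1 - t) * fb + t * a)"
        unfolding ut_def using convex_efun_combination[OF f(1), of xb fb u a t] fb real t by simp
      then obtain aT where aT: "f ut = ereal aT" "aT \<le> (1 - t) * fb + t * a"
        using f(2)[of ut] by (cases "f ut") auto
      have "inner (dphi ut - dphi xb) (u - xb) \<le> norm (dphi ut - dphi xb) * norm (u - xb)"
        by (rule norm_cauchy_schwarz)
      also have "\<dots> \<le> L * norm (ut - xb) * norm (u - xb)"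
        using lipschitz_on_normD[OF lip, of ut xb] by (intro mult_right_mono) auto
      also have "\<dots> = t * (L * norm (u - xb)^2)" unfolding utx using t by (simp add: power2_eq_square)
      finally have lip_term: "inner (dphi ut - dphi xb) (u - xb) \<le> t * (L * norm (u - xb)^2)" .
      have "phi ut - phi xb \<le> t * inner (dphi ut) (u - xb)" using grad[of ut xb] unfolding utx by simp
      also have "\<dots> = t * inner (dphi xb) (u - xb) + t * inner (dphi ut - dphi xb) (u - xb)"
        by (simp add: inner_diff_left algebra_simps)
      also have "\<dots> \<le> t * inner (dphi xb) (u - xb) + t * (t * (L * norm (u - xb)^2))"
        using lip_term t by (intro add_left_mono mult_left_mono) auto
      finally have "phi ut - phi xb \<le> t * inner (dphi xb) (u - xb) + t * (t * (L * norm (u - xb)^2))" .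
      moreover have "fb + phi xb \<le> aT + phi ut" by (rule min[OF aT(1)])
      ultimately have "t * (fb - a - inner (dphi xb) (u - xb)) \<le> t * (t * (L * norm (u - xb)^2))"
        using aT(2) by (simp add: algebra_simps)
      then show "fb - a - inner (dphi xb) (u - xb) \<le> t * (L * norm (u - xb)^2)"
        using t by (metis mult_le_cancel_left_pos)
    qed (use L in simp)
    then show ?thesis using real by (simp add: inner_minus_left)
  next
    case MInf then show ?thesis using f(2) by blast
  qed simp
  then show ?thesis using fb unfolding subdiff_def by simp
qed

section \<open>Step sizes\<close>

lemma finite_step_candidates: "finite ({a::real} \<union> {r1 | _::unit. P1} \<union> {r2 | _::unit. P2})"
proof -
  have "{r1 | _::unit. P1} \<subseteq> {r1}" "{r2 | _::unit. P2} \<subseteq> {r2}" by auto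
  then show ?thesis by (meson finite.emptyI finite.insertI finite_Un finite_subset)
qed

lemma pgrpda_step_le_prev: "pgrpda_step K dh beta mu mu' tp xn xp \<le> tp"
  unfolding pgrpda_step_def by (rule Min_le[OF finite_step_candidates]) simp

lemma pgrpda_step_K_bound:
  assumes "beta > 0" "mu \<ge> 0"
  shows "sqrt beta * pgrpda_step K dh beta mu mu' tp xn xp * norm (K xn - K xp) \<le> mu * norm (xn - xp)"
proof (cases "K xn - K xp = 0")
  case False
  have "pgrpda_step K dh beta mu mu' tp xn xp \<le> mu * norm (xn - xp) / (sqrt beta * norm (K xn - K xp))"
    unfolding pgrpda_step_def by (rule Min_le[OF finite_step_candidates]) (use False in auto)
  moreover have "sqrt beta * norm (K xn - K xp) > 0" using False assms by simp
  ultimately show ?thesis by (simp add: pos_le_divide_eq ac_simps)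
qed (use assms in simp)

lemma pgrpda_step_grad_bound:
  assumes "mu' \<ge> 0"
  shows "pgrpda_step K dh beta mu mu' tp xn xp * norm (dh xn - dh xp) \<le> mu' * norm (xn - xp)"
proof (cases "dh xn - dh xp = 0")
  case False
  have "pgrpda_step K dh beta mu mu' tp xn xp \<le> mu' * norm (xn - xp) / norm (dh xn - dh xp)"
    unfolding pgrpda_step_def by (rule Min_le[OF finite_step_candidates]) (use False in auto)
  moreover have "norm (dh xn - dh xp) > 0" using False by simp
  ultimately show ?thesis by (simp add: pos_le_divide_eq)
qed (use assms in simp)

lemma pgrpda_step_lower_bound:
  assumes pos: "beta > 0" "mu > 0" "mu' > 0" "B > 0" "L > 0"
    and K_le: "norm (K xn - K xp) \<le> B * norm (xn - xp)"
    and dh_le: "norm (dh xn - dh xp) \<le> L * norm (xn - xp)"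
  shows "min tp (min (mu / (sqrt beta * B)) (mu' / L)) \<le> pgrpda_step K dh beta mu mu' tp xn xp"
proof -
  have K_ratio: "mu / (sqrt beta * B) \<le> mu * norm (xn - xp) / (sqrt beta * norm (K xn - K xp))"
    if "K xn - K xp \<noteq> 0"
  proof -
    have "mu * (sqrt beta * norm (K xn - K xp)) \<le> mu * (sqrt beta * (B * norm (xn - xp)))"
      using K_le pos by (intro mult_left_mono) auto
    then show ?thesis using pos that by (simp add: divide_le_eq le_divide_eq ac_simps)
  qed
  have dh_ratio: "mu' / L \<le> mu' * norm (xn - xp) / norm (dh xn - dh xp)" if "dh xn - dh xp \<noteq> 0"
  proof -
    have "mu' * norm (dh xn - dh xp) \<le> mu' * (L * norm (xn - xp))"
      using dh_le pos by (intro mult_left_mono) auto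
    then show ?thesis using pos that by (simp add: divide_le_eq le_divide_eq ac_simps)
  qed
  show ?thesis unfolding pgrpda_step_def
    using K_ratio dh_ratio by (auto simp: finite_step_candidates min_le_iff_disj)
qed

section \<open>Elementary estimates\<close>

lemma inner_diff_polarization:
  fixes a b c :: "'a::real_inner"
  shows "inner (a - c) (b - c) = (norm (a - c)^2 + norm (b - c)^2 - norm (a - b)^2) / 2"
  using dot_norm_neg[of "a - c" "b - c"] by simp

lemma norm_convex_combination_diff_square:
  fixes a b v :: "'a::real_inner"
  assumes "c + d = 1"
  shows "norm ((c *\<^sub>R a + d *\<^sub>R b) - v)^2
         = c * norm (a - v)^2 + d * norm (b - v)^2 - c * d * norm (a - b)^2"
proof -
  have d: "d = 1 - c" using assms by simp
  have "(c *\<^sub>R a + d *\<^sub>R b) - v = c *\<^sub>R (a - v) + d *\<^sub>R (b - v)"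
    unfolding d by (simp add: algebra_simps)
  moreover have "norm (a - b)^2 = norm (a - v)^2 + norm (b - v)^2 - 2 * inner (a - v) (b - v)"
    using inner_diff_polarization[of a v b] by simp
  ultimately show ?thesis unfolding d power2_norm_eq_inner
    by (simp add: inner_add_left inner_add_right inner_commute algebra_simps power2_eq_square)
qed

text \<open>The weight \<open>\<psi> / (2 (\<psi> - 1))\<close> is the one for which the \<open>\<parallel>x - xb\<parallel>\<^sup>2\<close> terms cancel.\<close>
lemma inner_polarization_extrapolation:
  fixes x z xb :: "'a::real_inner"
  assumes psi: "psi > 1"
  shows "inner (z - x) (xb - x)
         = psi / (2 * (psi - 1)) * norm ((((psi - 1) / psi) *\<^sub>R x + (1 / psi) *\<^sub>R z) - xb)^2
           - psi / (2 * (psi - 1)) * norm (z - xb)^2 + (1 / 2 + 1 / (2 * psi)) * norm (z - x)^2"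
proof -
  define c where "c = (psi - 1) / psi"
  have c: "c > 0" "c \<noteq> 0" unfolding c_def using psi by auto
  have coeffs: "(psi - 1) / psi = c" "1 / psi = 1 - c" "psi / (2 * (psi - 1)) = 1 / (2 * c)"
    "1 / 2 + 1 / (2 * psi) = 1 - c / 2"
    unfolding c_def using psi by (simp_all add: field_simps)
  have "norm (x - z) = norm (z - x)" by (rule norm_minus_commute)
  then show ?thesis
    unfolding coeffs norm_convex_combination_diff_square[of c "1 - c", simplified] inner_diff_polarization[of z x xb]
    using c by (simp add: norm_minus_commute field_simps)
qed

lemma amgm_sqrt_weighted:
  fixes a b beta :: real
  assumes "beta > 0"
  shows "a * b / sqrt beta \<le> (a^2 / beta + b^2) / 2"
proof -
  have "0 \<le> (a / sqrt beta - b)^2" by simp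
  also have "\<dots> = a^2 / beta + b^2 - 2 * (a * b / sqrt beta)"
    using assms by (simp add: power2_eq_square field_simps)
  finally have "2 * (a * b / sqrt beta) \<le> a^2 / beta + b^2" by linarith
  from divide_right_mono[OF this, of 2] show ?thesis by simp
qed

lemma square_sum3_le: "(a + b + c)^2 \<le> 3 * (a^2 + b^2 + (c::real)^2)"
proof -
  have "0 \<le> (a - b)^2 + (b - c)^2 + (a - c)^2" by simp
  then show ?thesis by (simp add: power2_eq_square algebra_simps)
qed

lemma golden_square_le:
  assumes "0 \<le> psi" "psi \<le> golden"
  shows "psi^2 \<le> psi + 1"
proof -
  have "psi^2 - psi - 1 = (psi - golden) * (psi - (1 - sqrt 5) / 2)"
    unfolding golden_def by (simp add: algebra_simps power2_eq_square field_simps)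
  moreover have "psi - golden \<le> 0" using assms by simp
  moreover have "0 \<le> psi - (1 - sqrt 5) / 2"
  proof -
    have "1 \<le> sqrt 5" by simp
    with assms(1) show ?thesis by argo
  qed
  ultimately have "psi^2 - psi - 1 \<le> 0" by (simp add: mult_nonpos_nonneg)
  then show ?thesis by simp
qed

lemma golden_less_2: "golden < 2"
proof -
  have "sqrt 5 < 3" by (rule real_less_lsqrt) auto
  then show ?thesis unfolding golden_def by simp
qed

lemma geometric_decay_if_contraction:
  fixes E :: "nat \<Rightarrow> real"
  assumes contr: "\<And>k. k \<ge> N \<Longrightarrow> E (Suc k) \<le> q * E k" and q: "q > 0" and k: "k \<ge> N"
  shows "E k \<le> E N / q ^ N * q ^ k"
proof -
  have "E (N + j) \<le> E N * q ^ j" for j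
  proof (induction j)
    case (Suc j)
    have "E (N + Suc j) \<le> q * E (N + j)" using contr[of "N + j"] by simp
    also have "\<dots> \<le> q * (E N * q ^ j)" using Suc q by (intro mult_left_mono) auto
    finally show ?case by (simp add: algebra_simps)
  qed simp
  moreover obtain j where "k = N + j" using le_Suc_ex[OF k] by blast
  ultimately show ?thesis using q by (simp add: power_add)
qed

lemma R_linear_conv_if_norm_square_le:
  fixes v :: "nat \<Rightarrow> 'a::real_normed_vector"
  assumes q: "0 < q" "q < 1" and bound: "\<forall>n\<ge>N. norm (v n - l)^2 \<le> M * q ^ n"
  shows "R_linear_conv v l"
  unfolding R_linear_conv_def
proof (intro exI conjI)
  show "sqrt \<bar>M\<bar> + 1 > 0" by (simp add: add_nonneg_pos)
  show "Q_linear_zero (\<lambda>n. sqrt q ^ n)"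
    unfolding Q_linear_zero_def
  proof (intro conjI exI allI impI)
    show "(\<lambda>n. sqrt q ^ n) \<longlonglongrightarrow> 0" using q by (intro LIMSEQ_power_zero) simp
    show "0 < sqrt q" "sqrt q < 1" using q by auto
    fix n :: nat assume "n \<ge> 0"
    show "\<bar>sqrt q ^ Suc n\<bar> \<le> sqrt q * \<bar>sqrt q ^ n\<bar>" using q by simp
  qed
  show "\<forall>n\<ge>N. norm (v n - l) \<le> (sqrt \<bar>M\<bar> + 1) * sqrt q ^ n"
  proof (intro allI impI)
    fix n assume "n \<ge> N"
    have "norm (v n - l)^2 \<le> \<bar>M\<bar> * q ^ n"
      using bound \<open>n \<ge> N\<close> q by (meson abs_ge_self mult_right_mono order_trans zero_le_power less_imp_le)
    then have "norm (v n - l) \<le> sqrt (\<bar>M\<bar> * q ^ n)" by (simp add: real_le_rsqrt)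
    also have "\<dots> = sqrt \<bar>M\<bar> * sqrt q ^ n" by (simp add: real_sqrt_mult real_sqrt_power)
    also have "\<dots> \<le> (sqrt \<bar>M\<bar> + 1) * sqrt q ^ n" using q by (intro mult_right_mono) auto
    finally show "norm (v n - l) \<le> (sqrt \<bar>M\<bar> + 1) * sqrt q ^ n" .
  qed
qed

lemma subgradient_sum_identity:
  fixes x0 x1 x2 xb z1 z2 d0 d1 db :: "'x::real_inner" and y0 y1 yb :: "'y::real_inner"
    and K :: "'x \<Rightarrow> 'y" and Ka :: "'y \<Rightarrow> 'x"
  assumes K: "linear K" and adj: "\<And>u v. inner (Ka u) v = inner u (K v)"
    and t0: "t0 \<noteq> 0" and t1: "t1 \<noteq> 0"
  shows "inner ((1 / t1) *\<^sub>R (z2 - t1 *\<^sub>R Ka y1 - t1 *\<^sub>R d1 - x2)) (xb - x2)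
       + inner ((1 / t0) *\<^sub>R (z1 - t0 *\<^sub>R Ka y0 - t0 *\<^sub>R d0 - x1)) (x2 - x1)
       + inner (- Ka yb - db) (x1 - xb)
       + inner (K x1 + (1 / (beta * t1)) *\<^sub>R (y0 - y1) - K xb) (yb - y1)
     = inner (z2 - x2) (xb - x2) / t1 + inner (z1 - x1) (x2 - x1) / t0
       + inner (y1 - y0) (K (x2 - x1)) + inner (d1 - d0) (x2 - x1) + inner (d1 - db) (x1 - xb)
       + inner (y0 - y1) (yb - y1) / (beta * t1)"
proof -
  have e1: "(1 / t1) *\<^sub>R (z2 - t1 *\<^sub>R Ka y1 - t1 *\<^sub>R d1 - x2) = (1 / t1) *\<^sub>R (z2 - x2) - Ka y1 - d1"
    using t1 by (simp add: algebra_simps)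
  have e0: "(1 / t0) *\<^sub>R (z1 - t0 *\<^sub>R Ka y0 - t0 *\<^sub>R d0 - x1) = (1 / t0) *\<^sub>R (z1 - x1) - Ka y0 - d0"
    using t0 by (simp add: algebra_simps)
  have K_diff: "\<And>a c. K (a - c) = K a - K c" using linear_diff[OF K] by blast
  show ?thesis unfolding e1 e0
    by (simp add: inner_diff_left inner_diff_right inner_add_left inner_add_right adj K_diff
        inner_minus_left algebra_simps inner_commute[of "K _" y0] inner_commute[of "K _" y1]
        inner_commute[of "K _" yb])
       (simp add: add_divide_distrib diff_divide_distrib algebra_simps)
qed

text \<open>The variables stand for
  \<open>Ez2 = P\<parallel>z2 - xb\<parallel>\<^sup>2\<close>, \<open>nzx2 = \<parallel>z2 - x2\<parallel>\<^sup>2\<close>, \<open>nzx1 = \<parallel>z2 - x1\<parallel>\<^sup>2\<close>, \<open>d1 = \<parallel>x1 - x0\<parallel>\<^sup>2\<close>,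
  \<open>d2 = \<parallel>x2 - x1\<parallel>\<^sup>2\<close>, \<open>dy = \<parallel>y1 - y0\<parallel>\<^sup>2\<close>, \<open>ny0 = \<parallel>y0 - yb\<parallel>\<^sup>2\<close>, \<open>ny1 = \<parallel>y1 - yb\<parallel>\<^sup>2\<close>,
  \<open>nx1b = \<parallel>x1 - xb\<parallel>\<^sup>2\<close>; \<open>a1, a2, T, Hx, Hm, Y\<close> are the inner products of the optimality inequality.\<close>
lemma energy_descent_arith:
  fixes t0 t1 t2 beta psi mu mu' delta gg gh a1 a2 T Hx Hm Y Ez2 Ez3 nzx2 nzx1 d1 d2 dy ny0 ny1 nx1b :: real
  assumes pos: "t0 > 0" "t1 > 0" "t2 > 0" "beta > 0" "psi > 1" "psi^2 \<le> psi + 1"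
    and main: "a1 / t1 + a2 / t0 + T + Hx + Hm + Y / (beta * t1) + gg * ny1 \<le> 0"
    and a1: "a1 = Ez3 - Ez2 + (1 / 2 + 1 / (2 * psi)) * nzx2"
    and a2: "a2 = psi * (nzx1 + d2 - nzx2) / 2"
    and Y: "Y = (dy + ny1 - ny0) / 2"
    and T: "T \<ge> - (mu / (2 * t2)) * (dy / beta + d2)"
    and Hx: "Hx \<ge> - (mu' / (2 * t1)) * (d1 + d2)"
    and Hm: "Hm \<ge> gh * nx1b"
    and nonneg: "nzx2 \<ge> 0" "dy \<ge> 0" "nzx1 \<ge> 0" "d2 \<ge> 0"
    and steps: "t1 \<le> t0" "t1 / t0 \<ge> 1 / 2"
      "(t1 / t0) * psi / 2 - mu * (t1 / t2) / 2 - mu' \<ge> delta" "mu * (t1 / t2) \<le> 1"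
  shows "(Ez3 + ny1 / (2 * beta) + mu' / 2 * d2)
           + (delta * d2 + psi / 4 * nzx1 + t1 * gh * nx1b + t1 * gg * ny1)
         \<le> Ez2 + ny0 / (2 * beta) + mu' / 2 * d1"
proof -
  define rho where "rho = t1 / t0"
  define r where "r = t1 / t2"
  define M where "M = a1 / t1 + a2 / t0 + T + Hx + Hm + Y / (beta * t1) + gg * ny1"
  define X1 where "X1 = 1 / 2 + 1 / (2 * psi) - rho * psi / 2"
  define X2 where "X2 = rho * psi / 2 - psi / 4"
  define X3 where "X3 = rho * psi / 2 - mu * r / 2 - mu' - delta"
  define X4 where "X4 = (1 - mu * r) / (2 * beta)"
  have gap: "(Ez2 + ny0 / (2 * beta) + mu' / 2 * d1)
      - ((Ez3 + ny1 / (2 * beta) + mu' / 2 * d2)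
         + (delta * d2 + psi / 4 * nzx1 + t1 * gh * nx1b + t1 * gg * ny1))
      = - t1 * M + t1 * (T + (mu / (2 * t2)) * (dy / beta + d2))
        + t1 * (Hx + (mu' / (2 * t1)) * (d1 + d2)) + t1 * (Hm - gh * nx1b)
        + X1 * nzx2 + X2 * nzx1 + X3 * d2 + X4 * dy"
    unfolding M_def X1_def X2_def X3_def X4_def rho_def r_def a1 a2 Y using pos
    by (simp add: field_simps)
  \<comment> \<open>\<open>\<psi> \<le> golden\<close>, i.e. \<open>\<psi>\<^sup>2 \<le> \<psi> + 1\<close>, is exactly what makes \<open>X1\<close> nonnegative.\<close>
  have "X1 \<ge> 0"
  proof -
    have "rho \<le> 1" using steps(1) pos unfolding rho_def by simp
    then have "rho * psi \<le> psi" using pos by simp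
    moreover have "psi \<le> 1 + 1 / psi" using pos by (simp add: field_simps power2_eq_square)
    ultimately show ?thesis unfolding X1_def by simp
  qed
  moreover have "X2 \<ge> 0" unfolding X2_def rho_def using steps(2) pos by (simp add: field_simps)
  moreover have "X3 \<ge> 0" unfolding X3_def rho_def r_def using steps(3) by simp
  moreover have "X4 \<ge> 0" unfolding X4_def r_def using steps(4) pos by simp
  moreover have "t1 * M \<le> 0" using pos main unfolding M_def by (simp add: mult_nonneg_nonpos)
  moreover have "t1 * (T + (mu / (2 * t2)) * (dy / beta + d2)) \<ge> 0" using T pos by simp
  moreover have "t1 * (Hx + (mu' / (2 * t1)) * (d1 + d2)) \<ge> 0" using Hx pos by simp
  moreover have "t1 * (Hm - gh * nx1b) \<ge> 0" using Hm pos by simp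
  ultimately show ?thesis
    using gap nonneg mult_nonneg_nonneg[of X1 nzx2] mult_nonneg_nonneg[of X2 nzx1]
      mult_nonneg_nonneg[of X3 d2] mult_nonneg_nonneg[of X4 dy] by linarith
qed

lemma weighted_sum_le_ratio_bound:
  fixes X D a1 a2 a3 a4 d1 d2 d3 d4 n1 n2 n3 n4 :: real
  assumes n: "n1 \<ge> 0" "n2 \<ge> 0" "n3 \<ge> 0" "n4 \<ge> 0"
    and a: "a1 \<ge> 0" "a2 \<ge> 0" "a3 \<ge> 0" "a4 \<ge> 0"
    and d: "d1 > 0" "d2 > 0" "d3 > 0" "d4 > 0"
    and X: "X \<le> a1 * n1 + a2 * n2 + a3 * n3 + a4 * n4"
    and D: "d1 * n1 + d2 * n2 + d3 * n3 + d4 * n4 \<le> D"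
  shows "X \<le> (a1 / d1 + a2 / d2 + a3 / d3 + a4 / d4) * D"
proof -
  define C where "C = a1 / d1 + a2 / d2 + a3 / d3 + a4 / d4"
  have C0: "C \<ge> 0" unfolding C_def using a d by simp
  have term_le: "a * m \<le> C * (e * m)" if "a / e \<le> C" "e > 0" "m \<ge> 0" for a e m
  proof -
    have "a * m = (a / e) * (e * m)" using that by simp
    also have "\<dots> \<le> C * (e * m)" using that by (intro mult_right_mono) auto
    finally show ?thesis .
  qed
  have "a1 / d1 \<le> C" "a2 / d2 \<le> C" "a3 / d3 \<le> C" "a4 / d4 \<le> C" unfolding C_def using a d by simp_all
  then have "a1 * n1 + a2 * n2 + a3 * n3 + a4 * n4
      \<le> C * (d1 * n1) + C * (d2 * n2) + C * (d3 * n3) + C * (d4 * n4)"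
    using term_le n d by (meson add_mono)
  also have "\<dots> = C * (d1 * n1 + d2 * n2 + d3 * n3 + d4 * n4)" by (simp add: algebra_simps)
  also have "\<dots> \<le> C * D" using D C0 by (rule mult_left_mono)
  finally show ?thesis using X unfolding C_def by linarith
qed

lemma contraction_from_dissipation:
  fixes E E' D C :: real
  assumes "E' + D \<le> E" "E' \<le> C * D" "C > 0"
  shows "E' \<le> C / (1 + C) * E"
proof -
  have "E' \<le> C * (E - E')" using assms by (smt (verit) mult_left_mono)
  then have "E' * (1 + C) \<le> C * E" by (simp add: algebra_simps)
  then show ?thesis using assms(3) by (simp add: field_simps)
qed

section \<open>Energy of the P-GRPDA iteration\<close>

locale pgrpda_run =
  fixes f :: "'x::euclidean_space \<Rightarrow> ereal" and g :: "'y::euclidean_space \<Rightarrow> ereal"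
    and K :: "'x \<Rightarrow> 'y" and h :: "'x \<Rightarrow> real" and dh :: "'x \<Rightarrow> 'x"
    and Lbar gam_h gam_g beta psi mu mu' :: real
    and z x :: "nat \<Rightarrow> 'x" and w y :: "nat \<Rightarrow> 'y" and tau :: "nat \<Rightarrow> real"
    and xb :: 'x and yb :: 'y
  assumes f_pcl: "proper_fun f" "convex_efun f" "lsc_efun f"
    and g_pcl: "proper_fun g" "convex_efun g" "lsc_efun g"
    and K_lin: "linear K"
    and h_lip: "Lbar-lipschitz_on UNIV dh"
    and g_sc: "gam_g > 0" "strongly_convex_efun (fenchel_conj g) gam_g"
    and h_sc: "gam_h > 0" "strongly_convex_grad h dh gam_h"
    and alg: "is_pgrpda f dh K g beta psi mu mu' z x w y tau"
    and sol: "is_saddle_point f h K g xb yb"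
begin

abbreviation "G \<equiv> fenchel_conj g"

lemma params: "beta > 0" "1 < psi" "psi \<le> golden" "0 < mu'" "2 * mu' < mu" "mu < psi / 2" "tau 0 > 0"
  using alg unfolding is_pgrpda_def by auto

lemma psi_square_le: "psi^2 \<le> psi + 1"
  using golden_square_le params by auto

lemma mu_less_1: "mu < 1"
  using params golden_less_2 by simp

lemma iteration:
  "z (Suc n) = ((psi - 1) / psi) *\<^sub>R x n + (1 / psi) *\<^sub>R z n"
  "x (Suc n) = prox (tau n) f (z (Suc n) - tau n *\<^sub>R adjoint K (y n) - tau n *\<^sub>R dh (x n))"
  "tau (Suc n) = pgrpda_step K dh beta mu mu' (tau n) (x (Suc n)) (x n)"
  "w (Suc n) = prox (1 / (beta * tau (Suc n))) g ((1 / (beta * tau (Suc n))) *\<^sub>R y n + K (x (Suc n)))"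
  "y (Suc n) = y n + (beta * tau (Suc n)) *\<^sub>R (K (x (Suc n)) - w (Suc n))"
  using alg unfolding is_pgrpda_def by (auto dest!: spec[of _ "Suc n"])

lemma adjoint_inner: "inner (adjoint K u) v = inner u (K v)"
  using adjoint_works[OF K_lin, of v u] by (simp add: inner_commute)

lemma K_diff: "K (a - b) = K a - K b"
  using linear_diff[OF K_lin] by blast

definition "K_bound = onorm K + 1"

lemma K_bound: "K_bound > 0" "norm (K v) \<le> K_bound * norm v"
proof -
  have bl: "bounded_linear K" using K_lin linear_conv_bounded_linear by blast
  show "K_bound > 0" unfolding K_bound_def using onorm_pos_le[OF bl] by simp
  have "norm (K v) \<le> onorm K * norm v" by (rule onorm[OF bl])
  also have "\<dots> \<le> K_bound * norm v" unfolding K_bound_def by (simp add: mult_right_mono)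
  finally show "norm (K v) \<le> K_bound * norm v" .
qed

definition "grad_lip = Lbar + 1"

lemma grad_lip: "grad_lip > 0" "norm (dh a - dh b) \<le> grad_lip * norm (a - b)"
proof -
  show "grad_lip > 0" unfolding grad_lip_def using lipschitz_on_nonneg[OF h_lip] by simp
  have "grad_lip-lipschitz_on UNIV dh" unfolding grad_lip_def by (rule lipschitz_on_le[OF h_lip]) simp
  then show "norm (dh a - dh b) \<le> grad_lip * norm (a - b)" by (rule lipschitz_on_normD) auto
qed

definition "tau_min = min (tau 0) (min (mu / (sqrt beta * K_bound)) (mu' / grad_lip))"

lemma tau_min_pos: "tau_min > 0"
  unfolding tau_min_def using params K_bound grad_lip by auto

lemma tau_ge_min: "tau n \<ge> tau_min"
proof (induction n)
  case 0 then show ?case unfolding tau_min_def by simp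
next
  case (Suc n)
  have "min (tau n) (min (mu / (sqrt beta * K_bound)) (mu' / grad_lip)) \<le> tau (Suc n)"
    unfolding iteration(3)
    by (rule pgrpda_step_lower_bound)
      (use params K_bound(1) grad_lip K_bound(2)[of "x (Suc n) - x n", unfolded K_diff] in auto)
  then show ?case using Suc unfolding tau_min_def by linarith
qed

lemma tau_pos: "tau n > 0"
  using tau_ge_min[of n] tau_min_pos by linarith

lemma tau_decreasing: "tau (Suc n) \<le> tau n"
  unfolding iteration(3) by (rule pgrpda_step_le_prev)

lemma tau_K_bound: "sqrt beta * tau (Suc n) * norm (K (x (Suc n)) - K (x n)) \<le> mu * norm (x (Suc n) - x n)"
  unfolding iteration(3) by (rule pgrpda_step_K_bound) (use params in auto)

lemma tau_grad_bound: "tau (Suc n) * norm (dh (x (Suc n)) - dh (x n)) \<le> mu' * norm (x (Suc n) - x n)"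
  unfolding iteration(3) by (rule pgrpda_step_grad_bound) (use params in auto)

lemma x_subdiff:
  "(1 / tau n) *\<^sub>R (z (Suc n) - tau n *\<^sub>R adjoint K (y n) - tau n *\<^sub>R dh (x n) - x (Suc n))
     \<in> subdiff f (x (Suc n))"
  unfolding iteration(2) by (rule prox_subdiff[OF f_pcl tau_pos])

lemma w_formula: "w (Suc n) = K (x (Suc n)) + (1 / (beta * tau (Suc n))) *\<^sub>R (y n - y (Suc n))"
proof -
  have "beta \<noteq> 0" "tau (Suc n) \<noteq> 0" using params tau_pos[of "Suc n"] by auto
  then show ?thesis unfolding iteration(5)[of n] by (simp add: algebra_simps)
qed

lemma w_subdiff: "w (Suc n) \<in> subdiff G (y (Suc n))"
proof -
  define s where "s = beta * tau (Suc n)"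
  have s: "s > 0" unfolding s_def using params tau_pos by simp
  have "(1 / (1 / s)) *\<^sub>R (((1 / s) *\<^sub>R y n + K (x (Suc n))) - w (Suc n)) \<in> subdiff g (w (Suc n))"
    unfolding iteration(4)[of n, folded s_def] by (rule prox_subdiff[OF g_pcl]) (use s in simp)
  moreover have "(1 / (1 / s)) *\<^sub>R (((1 / s) *\<^sub>R y n + K (x (Suc n))) - w (Suc n)) = y (Suc n)"
    unfolding iteration(5)[of n, folded s_def] using s by (simp add: algebra_simps)
  ultimately show ?thesis by (simp add: subdiff_fenchel_conj_if_subdiff)
qed

lemma solution_values_finite: "\<exists>fb gb. f xb = ereal fb \<and> G yb = ereal gb"
proof -
  obtain a1 where fx1: "f (x (Suc 0)) = ereal a1" using x_subdiff[of 0] by (rule subdiff_finite_value)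
  obtain e1 where Gy1: "G (y (Suc 0)) = ereal e1" using w_subdiff[of 0] by (rule subdiff_finite_value)
  have "saddle_L f h K g xb yb \<le> saddle_L f h K g (x (Suc 0)) yb"
    and "saddle_L f h K g xb (y (Suc 0)) \<le> saddle_L f h K g xb yb"
    using sol unfolding is_saddle_point_def by auto
  moreover have "G yb \<noteq> -\<infinity>" by (rule fenchel_conj_neq_minf[OF g_pcl(1)])
  moreover have "f xb \<noteq> -\<infinity>" using f_pcl(1) unfolding proper_fun_def by blast
  ultimately have "f xb \<noteq> \<infinity>" "G yb \<noteq> \<infinity>"
    using fx1 Gy1 unfolding saddle_L_def by (cases "f xb"; cases "G yb"; simp)+
  then show ?thesis using \<open>G yb \<noteq> -\<infinity>\<close> \<open>f xb \<noteq> -\<infinity>\<close> by (cases "f xb"; cases "G yb") auto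
qed

lemma K_xb_subdiff: "K xb \<in> subdiff G yb"
proof -
  obtain fb gb where fb: "f xb = ereal fb" and gb: "G yb = ereal gb"
    using solution_values_finite by blast
  have "G yb + ereal (inner (K xb) (v - yb)) \<le> G v" for v
  proof (cases "G v")
    case (real s)
    have "saddle_L f h K g xb v \<le> saddle_L f h K g xb yb"
      using sol unfolding is_saddle_point_def by blast
    then show ?thesis using fb gb real unfolding saddle_L_def by (simp add: inner_diff_right)
  qed (use fenchel_conj_neq_minf[OF g_pcl(1)] in auto)
  then show ?thesis unfolding subdiff_def using gb by simp
qed

lemma gradient_inequality: "h u - h v \<le> inner (dh u) (u - v)"
proof -
  have "h v - h u \<ge> inner (dh u) (v - u) + gam_h / 2 * norm (v - u)^2"
    using h_sc(2) unfolding strongly_convex_grad_def by blast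
  moreover have "gam_h / 2 * norm (v - u)^2 \<ge> 0" using h_sc(1) by simp
  ultimately show ?thesis by (simp add: inner_diff_right)
qed

lemma gradient_strongly_monotone: "gam_h * norm (u - v)^2 \<le> inner (dh u - dh v) (u - v)"
proof -
  have "h u - h v \<ge> inner (dh v) (u - v) + gam_h / 2 * norm (u - v)^2"
    "h v - h u \<ge> inner (dh u) (v - u) + gam_h / 2 * norm (v - u)^2"
    using h_sc(2) unfolding strongly_convex_grad_def by blast+
  moreover have "norm (v - u) = norm (u - v)" by (rule norm_minus_commute)
  ultimately show ?thesis by (simp add: inner_diff_left inner_diff_right)
qed

text \<open>\<open>xb\<close> minimizes \<open>f + h + \<langle>K \<cdot>, yb\<rangle>\<close>, whose smooth part has the Lipschitz gradient
  \<open>dh + K\<^sup>* yb\<close>.\<close>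
lemma primal_subdiff_at_solution: "- adjoint K yb - dh xb \<in> subdiff f xb"
proof -
  obtain fb gb where fb: "f xb = ereal fb" and gb: "G yb = ereal gb"
    using solution_values_finite by blast
  have "- (adjoint K yb + dh xb) \<in> subdiff f xb"
  proof (rule subdiff_at_minimizer_plus_smooth[OF f_pcl(2) _ fb])
    show "f u \<noteq> -\<infinity>" for u using f_pcl(1) unfolding proper_fun_def by blast
    show "fb + (h xb + inner (K xb) yb) \<le> a + (h u + inner (K u) yb)" if "f u = ereal a" for u a
    proof -
      have "saddle_L f h K g xb yb \<le> saddle_L f h K g u yb"
        using sol unfolding is_saddle_point_def by blast
      then show ?thesis using fb gb that unfolding saddle_L_def by simp
    qed
    show "(h u + inner (K u) yb) - (h v + inner (K v) yb) \<le> inner (adjoint K yb + dh u) (u - v)" for u v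
    proof -
      have "inner (adjoint K yb) (u - v) = inner (K u) yb - inner (K v) yb"
        using adjoint_inner[of yb "u - v"] by (simp add: K_diff inner_diff_left inner_diff_right inner_commute)
      then show ?thesis using gradient_inequality[of u v] unfolding inner_add_left by linarith
    qed
    show "Lbar-lipschitz_on UNIV (\<lambda>u. adjoint K yb + dh u)"
      using h_lip unfolding lipschitz_on_def by (simp add: dist_norm)
  qed
  then show ?thesis by (simp only: minus_add_distrib diff_conv_add_uminus)
qed

lemma optimality_inequality:
  "inner (z (Suc (Suc k)) - x (Suc (Suc k))) (xb - x (Suc (Suc k))) / tau (Suc k)
   + inner (z (Suc k) - x (Suc k)) (x (Suc (Suc k)) - x (Suc k)) / tau k
   + inner (y (Suc k) - y k) (K (x (Suc (Suc k)) - x (Suc k)))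
   + inner (dh (x (Suc k)) - dh (x k)) (x (Suc (Suc k)) - x (Suc k))
   + inner (dh (x (Suc k)) - dh xb) (x (Suc k) - xb)
   + inner (y k - y (Suc k)) (yb - y (Suc k)) / (beta * tau (Suc k))
   + gam_g * norm (y (Suc k) - yb)^2 \<le> 0"
proof -
  let ?c = "1 / (beta * tau (Suc k))"
  have primal: "inner ((1 / tau (Suc k)) *\<^sub>R (z (Suc (Suc k)) - tau (Suc k) *\<^sub>R adjoint K (y (Suc k))
          - tau (Suc k) *\<^sub>R dh (x (Suc k)) - x (Suc (Suc k)))) (xb - x (Suc (Suc k)))
      + inner (- adjoint K yb - dh xb) (x (Suc k) - xb)
      + inner ((1 / tau k) *\<^sub>R (z (Suc k) - tau k *\<^sub>R adjoint K (y k) - tau k *\<^sub>R dh (x k) - x (Suc k)))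
          (x (Suc (Suc k)) - x (Suc k)) \<le> 0"
    by (rule subdiff_cyclically_monotone3[OF x_subdiff primal_subdiff_at_solution x_subdiff])
  have dual: "gam_g * norm (y (Suc k) - yb)^2
      \<le> inner (K (x (Suc k)) + ?c *\<^sub>R (y k - y (Suc k)) - K xb) (y (Suc k) - yb)"
    using strongly_convex_subdiff_monotone[OF g_sc(2) w_subdiff K_xb_subdiff] unfolding w_formula .
  have flip: "inner (K (x (Suc k)) + ?c *\<^sub>R (y k - y (Suc k)) - K xb) (yb - y (Suc k))
      = - inner (K (x (Suc k)) + ?c *\<^sub>R (y k - y (Suc k)) - K xb) (y (Suc k) - yb)"
    by (simp add: inner_diff_right)
  from primal dual flip show ?thesis
    using subgradient_sum_identity[OF K_lin adjoint_inner, of "tau k" "tau (Suc k)"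
        "z (Suc (Suc k))" "y (Suc k)" "dh (x (Suc k))" "x (Suc (Suc k))" xb "z (Suc k)" "y k"
        "dh (x k)" "x (Suc k)" yb "dh xb" beta] tau_pos[of k] tau_pos[of "Suc k"]
    by simp
qed

lemma z_minus_x: "z (Suc k) - x (Suc k) = psi *\<^sub>R (z (Suc (Suc k)) - x (Suc k))"
proof -
  have coeffs: "psi * ((psi - 1) / psi) = psi - 1" "psi * (1 / psi) = 1" using params by simp_all
  have "psi *\<^sub>R (((psi - 1) / psi) *\<^sub>R x (Suc k) + (1 / psi) *\<^sub>R z (Suc k) - x (Suc k))
      = (psi * ((psi - 1) / psi)) *\<^sub>R x (Suc k) + (psi * (1 / psi)) *\<^sub>R z (Suc k) - psi *\<^sub>R x (Suc k)"
    by (simp only: scaleR_right_diff_distrib scaleR_add_right scaleR_scaleR)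
  also have "\<dots> = z (Suc k) - x (Suc k)" unfolding coeffs by (simp add: scaleR_diff_left)
  finally show ?thesis unfolding iteration(1)[of "Suc k"] by simp
qed

lemma K_cross_term_lower:
  "inner (y (Suc k) - y k) (K (x (Suc (Suc k)) - x (Suc k)))
     \<ge> - (mu / (2 * tau (Suc (Suc k)))) * (norm (y (Suc k) - y k)^2 / beta + norm (x (Suc (Suc k)) - x (Suc k))^2)"
proof -
  let ?dy = "norm (y (Suc k) - y k)" and ?dx = "norm (x (Suc (Suc k)) - x (Suc k))"
  let ?t = "tau (Suc (Suc k))"
  have t: "?t > 0" and b: "beta > 0" using tau_pos params by auto
  have "norm (K (x (Suc (Suc k)) - x (Suc k))) \<le> mu * ?dx / (sqrt beta * ?t)"
    using tau_K_bound[of "Suc k"] t b by (simp add: K_diff pos_le_divide_eq ac_simps)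
  then have "\<bar>inner (y (Suc k) - y k) (K (x (Suc (Suc k)) - x (Suc k)))\<bar> \<le> ?dy * (mu * ?dx / (sqrt beta * ?t))"
    using Cauchy_Schwarz_ineq2 order_trans mult_left_mono norm_ge_zero by metis
  also have "\<dots> = (mu / ?t) * (?dy * ?dx / sqrt beta)" by (simp add: ac_simps)
  also have "\<dots> \<le> (mu / ?t) * ((?dy^2 / beta + ?dx^2) / 2)"
    using amgm_sqrt_weighted[OF b] params t by (intro mult_left_mono) auto
  finally show ?thesis by (simp add: abs_le_iff)
qed

lemma grad_cross_term_lower:
  "inner (dh (x (Suc k)) - dh (x k)) (x (Suc (Suc k)) - x (Suc k))
     \<ge> - (mu' / (2 * tau (Suc k))) * (norm (x (Suc k) - x k)^2 + norm (x (Suc (Suc k)) - x (Suc k))^2)"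
proof -
  let ?d1 = "norm (x (Suc k) - x k)" and ?d2 = "norm (x (Suc (Suc k)) - x (Suc k))"
  have t: "tau (Suc k) > 0" using tau_pos by simp
  have "norm (dh (x (Suc k)) - dh (x k)) \<le> mu' * ?d1 / tau (Suc k)"
    using tau_grad_bound[of k] t by (simp add: pos_le_divide_eq ac_simps)
  then have "\<bar>inner (dh (x (Suc k)) - dh (x k)) (x (Suc (Suc k)) - x (Suc k))\<bar> \<le> (mu' * ?d1 / tau (Suc k)) * ?d2"
    using Cauchy_Schwarz_ineq2 order_trans mult_right_mono norm_ge_zero by metis
  also have "\<dots> = (mu' / tau (Suc k)) * (?d1 * ?d2)" by simp
  also have "\<dots> \<le> (mu' / tau (Suc k)) * ((?d1^2 + ?d2^2) / 2)"
    using sum_squares_bound[of ?d1 ?d2] params t by (intro mult_left_mono) auto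
  finally show ?thesis by (simp add: abs_le_iff)
qed

definition "zcoef = psi / (2 * (psi - 1))"

definition "energy k = zcoef * norm (z (Suc (Suc k)) - xb)^2 + norm (y k - yb)^2 / (2 * beta)
                       + mu' / 2 * norm (x (Suc k) - x k)^2"

definition "delta = (psi / 2 - mu / 2 - mu') / 2"

definition "dissipation k = delta * norm (x (Suc (Suc k)) - x (Suc k))^2
    + psi / 4 * norm (z (Suc (Suc k)) - x (Suc k))^2
    + tau (Suc k) * gam_h * norm (x (Suc k) - xb)^2 + tau (Suc k) * gam_g * norm (y (Suc k) - yb)^2"

text \<open>The step-size ratios needed for the energy to decrease; they hold eventually because
  the step sizes decrease to a positive limit.\<close>
definition "steps_settled k \<longleftrightarrow> 1 / 2 \<le> tau (Suc k) / tau k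
    \<and> delta \<le> (tau (Suc k) / tau k) * psi / 2 - mu * (tau (Suc k) / tau (Suc (Suc k))) / 2 - mu'
    \<and> mu * (tau (Suc k) / tau (Suc (Suc k))) \<le> 1"

lemma zcoef_pos: "zcoef > 0"
  unfolding zcoef_def using params by simp

lemma delta_pos: "delta > 0"
  unfolding delta_def using params by simp

lemma energy_nonneg: "energy k \<ge> 0"
  unfolding energy_def using zcoef_pos params by simp

lemma energy_descent:
  assumes "steps_settled k"
  shows "energy (Suc k) + dissipation k \<le> energy k"
proof -
  have a1: "inner (z (Suc (Suc k)) - x (Suc (Suc k))) (xb - x (Suc (Suc k)))
      = zcoef * norm (z (Suc (Suc (Suc k))) - xb)^2 - zcoef * norm (z (Suc (Suc k)) - xb)^2
        + (1 / 2 + 1 / (2 * psi)) * norm (z (Suc (Suc k)) - x (Suc (Suc k)))^2"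
    unfolding zcoef_def iteration(1)[of "Suc (Suc k)"]
    by (rule inner_polarization_extrapolation) (use params in simp)
  have a2: "inner (z (Suc k) - x (Suc k)) (x (Suc (Suc k)) - x (Suc k))
      = psi * (norm (z (Suc (Suc k)) - x (Suc k))^2 + norm (x (Suc (Suc k)) - x (Suc k))^2
               - norm (z (Suc (Suc k)) - x (Suc (Suc k)))^2) / 2"
    unfolding z_minus_x[of k] using inner_diff_polarization[of "z (Suc (Suc k))" "x (Suc k)" "x (Suc (Suc k))"]
    by simp
  have Y: "inner (y k - y (Suc k)) (yb - y (Suc k))
      = (norm (y (Suc k) - y k)^2 + norm (y (Suc k) - yb)^2 - norm (y k - yb)^2) / 2"
    using inner_diff_polarization[of "y k" "y (Suc k)" yb] by (simp add: norm_minus_commute)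
  have "(zcoef * norm (z (Suc (Suc (Suc k))) - xb)^2 + norm (y (Suc k) - yb)^2 / (2 * beta)
        + mu' / 2 * norm (x (Suc (Suc k)) - x (Suc k))^2)
      + (delta * norm (x (Suc (Suc k)) - x (Suc k))^2 + psi / 4 * norm (z (Suc (Suc k)) - x (Suc k))^2
        + tau (Suc k) * gam_h * norm (x (Suc k) - xb)^2 + tau (Suc k) * gam_g * norm (y (Suc k) - yb)^2)
    \<le> zcoef * norm (z (Suc (Suc k)) - xb)^2 + norm (y k - yb)^2 / (2 * beta)
       + mu' / 2 * norm (x (Suc k) - x k)^2"
    by (rule energy_descent_arith[OF tau_pos[of k] tau_pos[of "Suc k"] tau_pos[of "Suc (Suc k)"]
          params(1,2) psi_square_le optimality_inequality a1 a2 Y K_cross_term_lower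
          grad_cross_term_lower gradient_strongly_monotone])
      (use assms tau_decreasing in \<open>auto simp: steps_settled_def\<close>)
  then show ?thesis unfolding energy_def dissipation_def by simp
qed

lemma eventually_steps_settled: "eventually steps_settled sequentially"
proof -
  have "decseq tau" using tau_decreasing by (simp add: decseq_SucI)
  then obtain L where L: "tau \<longlonglongrightarrow> L"
    using decseq_convergent[of tau tau_min] tau_ge_min by blast
  have "L \<ge> tau_min" using L tau_ge_min by (intro LIMSEQ_le_const) auto
  then have L0: "L \<noteq> 0" using tau_min_pos by simp
  have r1: "(\<lambda>k. tau (Suc k) / tau k) \<longlonglongrightarrow> 1"
    using tendsto_divide[OF LIMSEQ_Suc[OF L] L L0] L0 by simp
  have r2: "(\<lambda>k. tau (Suc k) / tau (Suc (Suc k))) \<longlonglongrightarrow> 1"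
    using tendsto_divide[OF LIMSEQ_Suc[OF L] LIMSEQ_Suc[OF LIMSEQ_Suc[OF L]] L0] L0 by simp
  have e1: "eventually (\<lambda>k. 1 / 2 < tau (Suc k) / tau k) sequentially"
    using order_tendstoD(1)[OF r1, of "1 / 2"] by simp
  have "(\<lambda>k. (tau (Suc k) / tau k) * psi / 2 - mu * (tau (Suc k) / tau (Suc (Suc k))) / 2 - mu')
      \<longlonglongrightarrow> 1 * psi / 2 - mu * 1 / 2 - mu'"
    by (intro tendsto_intros r1 r2) simp_all
  moreover have "delta < 1 * psi / 2 - mu * 1 / 2 - mu'" using delta_pos unfolding delta_def by simp
  ultimately have e2: "eventually (\<lambda>k. delta
      < (tau (Suc k) / tau k) * psi / 2 - mu * (tau (Suc k) / tau (Suc (Suc k))) / 2 - mu') sequentially"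
    by (rule order_tendstoD(1))
  have "(\<lambda>k. mu * (tau (Suc k) / tau (Suc (Suc k)))) \<longlonglongrightarrow> mu * 1"
    by (intro tendsto_intros r2)
  then have e3: "eventually (\<lambda>k. mu * (tau (Suc k) / tau (Suc (Suc k))) < 1) sequentially"
    using mu_less_1 by (intro order_tendstoD(2)) simp_all
  show ?thesis
    by (rule eventually_mono[OF eventually_conj[OF e1 eventually_conj[OF e2 e3]]])
      (auto simp: steps_settled_def)
qed

lemma z_dist_le:
  "norm (z (Suc (Suc (Suc k))) - xb)^2
     \<le> 3 * (norm (x (Suc k) - xb)^2 + norm (x (Suc (Suc k)) - x (Suc k))^2
            + norm (z (Suc (Suc k)) - x (Suc k))^2)"
proof -
  let ?x1 = "x (Suc k)" and ?x2 = "x (Suc (Suc k))" and ?z2 = "z (Suc (Suc k))"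
  define c where "c = (psi - 1) / psi"
  have c01: "0 \<le> c" "c \<le> 1" unfolding c_def using params by auto
  have inv_psi: "1 / psi = 1 - c" unfolding c_def using params by (simp add: field_simps)
  have split: "z (Suc (Suc (Suc k))) - xb = (?x1 - xb) + c *\<^sub>R (?x2 - ?x1) + (1 - c) *\<^sub>R (?z2 - ?x1)"
    unfolding iteration(1)[of "Suc (Suc k)"] c_def[symmetric] inv_psi by (simp add: algebra_simps)
  have "norm (z (Suc (Suc (Suc k))) - xb)
      \<le> norm (?x1 - xb) + norm (c *\<^sub>R (?x2 - ?x1)) + norm ((1 - c) *\<^sub>R (?z2 - ?x1))"
    unfolding split by (meson add_mono norm_triangle_ineq order_trans order_refl)
  also have "\<dots> \<le> norm (?x1 - xb) + norm (?x2 - ?x1) + norm (?z2 - ?x1)"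
    using c01 by (intro add_mono) (simp_all add: mult_left_le_one_le)
  finally have "norm (z (Suc (Suc (Suc k))) - xb)^2 \<le> (norm (?x1 - xb) + norm (?x2 - ?x1) + norm (?z2 - ?x1))^2"
    by (simp add: power_mono)
  also have "\<dots> \<le> 3 * (norm (?x1 - xb)^2 + norm (?x2 - ?x1)^2 + norm (?z2 - ?x1)^2)"
    by (rule square_sum3_le)
  finally show ?thesis .
qed

definition "contraction_const = 3 * zcoef / (tau_min * gam_h) + (3 * zcoef + mu' / 2) / delta
    + 3 * zcoef / (psi / 4) + (1 / (2 * beta)) / (tau_min * gam_g)"

definition "zeta = contraction_const / (1 + contraction_const)"

lemma contraction_const_pos: "contraction_const > 0"
  unfolding contraction_const_def using zcoef_pos tau_min_pos h_sc g_sc params delta_pos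
  by (intro add_pos_pos) auto

lemma zeta_bounds: "0 < zeta" "zeta < 1"
  unfolding zeta_def using contraction_const_pos by auto

lemma energy_Suc_le_dissipation: "energy (Suc k) \<le> contraction_const * dissipation k"
proof -
  let ?x1 = "x (Suc k)" and ?x2 = "x (Suc (Suc k))" and ?z2 = "z (Suc (Suc k))" and ?y1 = "y (Suc k)"
  have "zcoef * norm (z (Suc (Suc (Suc k))) - xb)^2
     \<le> zcoef * (3 * (norm (?x1 - xb)^2 + norm (?x2 - ?x1)^2 + norm (?z2 - ?x1)^2))"
    using z_dist_le zcoef_pos by (intro mult_left_mono) auto
  then have upper: "energy (Suc k) \<le> (3 * zcoef) * norm (?x1 - xb)^2 + (3 * zcoef + mu' / 2) * norm (?x2 - ?x1)^2
      + (3 * zcoef) * norm (?z2 - ?x1)^2 + (1 / (2 * beta)) * norm (?y1 - yb)^2"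
    unfolding energy_def by (simp add: algebra_simps)
  have "tau_min * gam_h * norm (?x1 - xb)^2 \<le> tau (Suc k) * gam_h * norm (?x1 - xb)^2"
    "tau_min * gam_g * norm (?y1 - yb)^2 \<le> tau (Suc k) * gam_g * norm (?y1 - yb)^2"
    using tau_ge_min h_sc g_sc by (intro mult_right_mono; simp)+
  then have lower: "(tau_min * gam_h) * norm (?x1 - xb)^2 + delta * norm (?x2 - ?x1)^2
      + (psi / 4) * norm (?z2 - ?x1)^2 + (tau_min * gam_g) * norm (?y1 - yb)^2 \<le> dissipation k"
    unfolding dissipation_def by linarith
  show ?thesis unfolding contraction_const_def
    by (rule weighted_sum_le_ratio_bound[OF _ _ _ _ _ _ _ _ _ _ _ _ upper lower])
      (use zcoef_pos tau_min_pos h_sc g_sc params delta_pos in auto)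
qed

lemma energy_contraction:
  assumes "steps_settled k"
  shows "energy (Suc k) \<le> zeta * energy k"
  unfolding zeta_def
  by (rule contraction_from_dissipation[OF energy_descent[OF assms] energy_Suc_le_dissipation
        contraction_const_pos])

lemma x_dist_le_energy:
  assumes "steps_settled k"
  shows "tau_min * gam_h * norm (x (Suc k) - xb)^2 \<le> energy k"
proof -
  have "tau_min * gam_h * norm (x (Suc k) - xb)^2 \<le> tau (Suc k) * gam_h * norm (x (Suc k) - xb)^2"
    using tau_ge_min h_sc by (intro mult_right_mono) auto
  also have "\<dots> \<le> dissipation k"
    unfolding dissipation_def using delta_pos params tau_pos[of "Suc k"] g_sc by simp
  also have "\<dots> \<le> energy k"
    using energy_descent[OF assms] energy_nonneg[of "Suc k"] by linarith
  finally show ?thesis .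
qed

lemma energy_geometric_decay:
  "\<exists>A N. 0 < A \<and> (\<forall>n\<ge>N. energy n \<le> A * zeta ^ n \<and> norm (x n - xb)^2 \<le> A * zeta ^ n)"
proof -
  obtain N where settled: "\<And>k. k \<ge> N \<Longrightarrow> steps_settled k"
    using eventually_steps_settled unfolding eventually_sequentially by blast
  define A where "A = energy N / zeta ^ N"
  have A: "0 \<le> A" unfolding A_def using energy_nonneg zeta_bounds by simp
  have decay: "energy k \<le> A * zeta ^ k" if "k \<ge> N" for k
    unfolding A_def by (rule geometric_decay_if_contraction[where E = energy])
      (use energy_contraction settled zeta_bounds that in auto)
  define cx where "cx = 1 / (zeta * (tau_min * gam_h))"
  have cx: "0 \<le> cx" unfolding cx_def using zeta_bounds tau_min_pos h_sc by simp
  have x_dist: "norm (x (Suc k) - xb)^2 \<le> cx * A * zeta ^ Suc k" if "k \<ge> N" for k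
  proof -
    have "tau_min * gam_h * norm (x (Suc k) - xb)^2 \<le> A * zeta ^ k"
      using x_dist_le_energy[OF settled[OF that]] decay[OF that] by linarith
    then show ?thesis unfolding cx_def using tau_min_pos h_sc zeta_bounds
      by (simp add: field_simps mult.commute)
  qed
  have "energy n \<le> (A + cx * A + 1) * zeta ^ n \<and> norm (x n - xb)^2 \<le> (A + cx * A + 1) * zeta ^ n"
    if n_ge: "n \<ge> Suc N" for n
  proof -
    obtain k where n: "n = Suc k" and k: "k \<ge> N" using n_ge by (cases n) auto
    have "0 \<le> zeta ^ n" "0 \<le> cx * A" using zeta_bounds cx A by simp_all
    then show ?thesis using decay[of n] x_dist[OF k] n_ge A unfolding n
      by (simp add: ring_distribs) (smt (verit) mult_nonneg_nonneg)
  qed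
  moreover have "0 < A + cx * A + 1" using A cx by (simp add: add_nonneg_pos)
  ultimately show ?thesis by blast
qed

lemma distances_le_energy:
  "norm (xb - z (n + 2))^2 \<le> 1 / zcoef * energy n"
  "norm (yb - y n)^2 \<le> 2 * beta * energy n"
  "norm (x n - x (n + 1))^2 \<le> 2 / mu' * energy n"
proof -
  have b: "beta > 0" and m: "mu' > 0" using params by auto
  have terms: "zcoef * norm (z (Suc (Suc n)) - xb)^2 \<le> energy n"
    "norm (y n - yb)^2 / (2 * beta) \<le> energy n" "mu' / 2 * norm (x (Suc n) - x n)^2 \<le> energy n"
    unfolding energy_def using zcoef_pos b m by auto
  show "norm (xb - z (n + 2))^2 \<le> 1 / zcoef * energy n"
    using terms(1) zcoef_pos by (simp add: norm_minus_commute field_simps)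
  show "norm (yb - y n)^2 \<le> 2 * beta * energy n"
    using terms(2) b by (simp add: norm_minus_commute field_simps)
  show "norm (x n - x (n + 1))^2 \<le> 2 / mu' * energy n"
    using terms(3) m by (simp add: norm_minus_commute field_simps)
qed

lemma linear_rates:
  "\<exists>A N. 0 < A \<and> (\<forall>n\<ge>N. norm (xb - z (n + 2))^2 \<le> A * zeta ^ n \<and> norm (yb - y n)^2 \<le> A * zeta ^ n
      \<and> norm (x n - x (n + 1))^2 \<le> A * zeta ^ n \<and> norm ((x n, y n) - (xb, yb))^2 \<le> A * zeta ^ n)"
proof -
  obtain A N where A: "0 < A"
    and decay: "\<And>n. n \<ge> N \<Longrightarrow> energy n \<le> A * zeta ^ n \<and> norm (x n - xb)^2 \<le> A * zeta ^ n"
    using energy_geometric_decay by blast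
  define c where "c = 1 / zcoef + 2 * beta + 2 / mu' + 1"
  have pos: "0 < 1 / zcoef" "0 < 2 * beta" "0 < 2 / mu'" using zcoef_pos params by auto
  have scaled: "d * energy n \<le> c * A * zeta ^ n" if "0 \<le> d" "d \<le> c" "n \<ge> N" for d n
  proof -
    have "d * energy n \<le> d * (A * zeta ^ n)" using decay[OF that(3)] that(1) by (intro mult_left_mono) auto
    also have "\<dots> \<le> c * (A * zeta ^ n)" using that A zeta_bounds by (intro mult_right_mono) auto
    finally show ?thesis by (simp add: mult.assoc)
  qed
  have "norm (xb - z (n + 2))^2 \<le> c * A * zeta ^ n \<and> norm (yb - y n)^2 \<le> c * A * zeta ^ n
      \<and> norm (x n - x (n + 1))^2 \<le> c * A * zeta ^ n
      \<and> norm ((x n, y n) - (xb, yb))^2 \<le> c * A * zeta ^ n" if n: "n \<ge> N" for n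
  proof (intro conjI)
    show "norm (xb - z (n + 2))^2 \<le> c * A * zeta ^ n"
      by (rule order_trans[OF distances_le_energy(1) scaled]) (use pos n in \<open>auto simp: c_def\<close>)
    show "norm (yb - y n)^2 \<le> c * A * zeta ^ n"
      by (rule order_trans[OF distances_le_energy(2) scaled]) (use pos n in \<open>auto simp: c_def\<close>)
    show "norm (x n - x (n + 1))^2 \<le> c * A * zeta ^ n"
      by (rule order_trans[OF distances_le_energy(3) scaled]) (use pos n in \<open>auto simp: c_def\<close>)
    have "norm ((x n, y n) - (xb, yb))^2 = norm (x n - xb)^2 + norm (yb - y n)^2"
      by (simp add: norm_Pair norm_minus_commute)
    also have "\<dots> \<le> 1 * (A * zeta ^ n) + 2 * beta * energy n"
      using decay[OF n] distances_le_energy(2) by (intro add_mono) auto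
    also have "\<dots> \<le> (1 + 2 * beta) * (A * zeta ^ n)"
      using mult_left_mono[OF conjunct1[OF decay[OF n]], of "2 * beta"] pos by (simp add: ring_distribs)
    also have "\<dots> \<le> c * A * zeta ^ n"
      unfolding mult.assoc using pos A zeta_bounds by (intro mult_right_mono) (auto simp: c_def)
    finally show "norm ((x n, y n) - (xb, yb))^2 \<le> c * A * zeta ^ n" .
  qed
  moreover have "0 < c * A" using pos A unfolding c_def by (intro mult_pos_pos add_pos_pos) auto
  ultimately show ?thesis by blast
qed

end

theorem theorem4p2:
  fixes f :: "'x::euclidean_space \<Rightarrow> ereal" and g :: "'y::euclidean_space \<Rightarrow> ereal"
    and K :: "'x \<Rightarrow> 'y" and h :: "'x \<Rightarrow> real" and dh :: "'x \<Rightarrow> 'x"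
    and Lbar gam_h gam_g beta psi mu mu' :: real
    and z x :: "nat \<Rightarrow> 'x" and w y :: "nat \<Rightarrow> 'y" and tau :: "nat \<Rightarrow> real"
    and xb :: 'x and yb :: 'y
  assumes f_pcl: "proper_fun f" "convex_efun f" "lsc_efun f"
    and g_pcl: "proper_fun g" "convex_efun g" "lsc_efun g"
    and K_lin: "linear K"
    and h_conv: "convex_on UNIV h"
    and h_grad: "\<And>u. (h has_derivative (\<lambda>v. inner (dh u) v)) (at u)"
    and h_lip: "Lbar-lipschitz_on UNIV dh"
    and A1_sol: "\<exists>xs ys. is_saddle_point f h K g xs ys"
    and A1_ri: "(0::'y) \<in> rel_interior {a - b | a b. a \<in> K ` edom f \<and> b \<in> edom g}"
    and g_sc: "gam_g > 0" "strongly_convex_efun (fenchel_conj g) gam_g"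
    and h_sc: "gam_h > 0" "strongly_convex_grad h dh gam_h"
    and alg: "is_pgrpda f dh K g beta psi mu mu' z x w y tau"
    and sol: "is_saddle_point f h K g xb yb"
    and conv_x: "x \<longlonglongrightarrow> xb" and conv_y: "y \<longlonglongrightarrow> yb"
  shows "\<exists>V1 V2 Z zeta n4. V1 > 0 \<and> V2 > 0 \<and> Z > 0 \<and> 0 < zeta \<and> zeta < 1 \<and>
           (\<forall>n\<ge>n4. norm (xb - z (n + 2))^2 \<le> Z * zeta ^ n \<and>
                     norm (yb - y n)^2 \<le> V1 * zeta ^ n \<and>
                     norm (x n - x (n + 1))^2 \<le> V2 * zeta ^ n)
         \<and> R_linear_conv (\<lambda>n. (x n, y n)) (xb, yb)"
proof -
  interpret pgrpda_run f g K h dh Lbar gam_h gam_g beta psi mu mu' z x w y tau xb yb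
    by (rule pgrpda_run.intro[OF f_pcl g_pcl K_lin h_lip g_sc h_sc alg sol])
  obtain A N where "0 < A" and rates: "\<forall>n\<ge>N. norm (xb - z (n + 2))^2 \<le> A * zeta ^ n
      \<and> norm (yb - y n)^2 \<le> A * zeta ^ n \<and> norm (x n - x (n + 1))^2 \<le> A * zeta ^ n
      \<and> norm ((x n, y n) - (xb, yb))^2 \<le> A * zeta ^ n"
    using linear_rates by blast
  moreover have "R_linear_conv (\<lambda>n. (x n, y n)) (xb, yb)"
    by (rule R_linear_conv_if_norm_square_le[OF zeta_bounds, of N]) (use rates in auto)
  ultimately show ?thesis using zeta_bounds by blast
qed

end
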